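(* Let $\rho>0$, $m,m'\in(-\sqrt\rho,\sqrt\rho)$ and $N\in\mathbb{N}$. Then \[ w_2(\mu_{\mathrm{MC}}^{m,\rho;N},\mu_{\mathrm{MC}}^{m',\rho;N};N)\le\left(1+\frac{2}{\sqrt{1-m^2/\rho}}\right)|m-m'|. \]
   Context: Identify the lattice $\Lambda$ ($N=|\Lambda|$) with $[N]$ and field configurations with $\phi\in\mathbb{R}^N$. For $\rho>0$ and $m\in(-\sqrt\rho,\sqrt\rho)$, the auxiliary microcanonical ensemble $\mu_{\mathrm{MC}}^{m,\rho;N}$ is the normalized uniform (surface) probability measure on the $(N-2)$-sphere $\{\phi\in\mathbb{R}^N:\sum_x\phi_x=mN,\ \sum_x\phi_x^2=\rho N\}$; equivalently, with $U$ an orthogonal matrix with $(U\phi)_1=N^{-1/2}\sum_x\phi_x$, $\langle f\rangle_{\mathrm{MC}}^{m,\rho;N}=\frac1{|\mathbb{S}^{N-2}|}\int_{\mathbb{S}^{N-2}}d\Omega\,f(U^{-1}(m\sqrt N,\sqrt{N(\rho-m^2)}\Omega))$. $w_2(\mu_1,\mu_2;N)=\left(\inf_\gamma\int\gamma(dx,dy)\frac1N\sum_{i=1}^N|x_i-y_i|^2\right)^{1/2}$ over couplings $\gamma$ of $\mu_1,\mu_2$. *)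

theory Defs
  imports "HOL-Analysis.Analysis"
begin

text \<open>The lattice \<Lambda> with N = |\<Lambda>| sites is a finite type 'n, N = CARD('n);
  field configurations are vectors in real^'n.\<close>

definition field_sum :: "real ^ 'n::finite \<Rightarrow> real" where
  "field_sum \<phi> = (\<Sum>x\<in>UNIV. \<phi> $ x)"

definition const_field :: "real \<Rightarrow> real ^ 'n::finite" where
  "const_field m = (\<chi> x. m)"

definition hyp_proj :: "real \<Rightarrow> real ^ 'n::finite \<Rightarrow> real ^ 'n" where
  "hyp_proj m \<phi> = \<phi> - ((field_sum \<phi> - m * real CARD('n)) / real CARD('n)) *\<^sub>R const_field 1"

text \<open>Radius of the (N-2)-sphere {\<phi>. \<Sum>\<phi> = mN, \<Sum>\<phi>^2 = \<rho>N} around its centre (m,...,m).\<close>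
definition mc_radius :: "'n::finite itself \<Rightarrow> real \<Rightarrow> real \<Rightarrow> real" where
  "mc_radius _ m \<rho> = sqrt (real CARD('n) * (\<rho> - m\<^sup>2))"

text \<open>Solid cylinder: the (punctured) (N-1)-dimensional ball bounded by the sphere inside the
  hyperplane, thickened by a fixed height in the direction of (1,...,1).  Its N-dimensional
  Lebesgue measure restricted to cones over subsets of the sphere is proportional to the
  (N-1)-dimensional volume of those cones, i.e. to the cone measure.\<close>
definition mc_cylinder :: "real \<Rightarrow> real \<Rightarrow> (real ^ 'n::finite) set" where
  "mc_cylinder m \<rho> = {\<phi>. m * real CARD('n) \<le> field_sum \<phi> \<and> field_sum \<phi> \<le> m * real CARD('n) + 1 \<and>
      0 < norm (hyp_proj m \<phi> - const_field m) \<and>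
      norm (hyp_proj m \<phi> - const_field m) \<le> mc_radius TYPE('n) m \<rho>}"

definition mc_radial :: "real \<Rightarrow> real \<Rightarrow> real ^ 'n::finite \<Rightarrow> real ^ 'n" where
  "mc_radial m \<rho> \<phi> = const_field m +
     (mc_radius TYPE('n) m \<rho> / norm (hyp_proj m \<phi> - const_field m)) *\<^sub>R (hyp_proj m \<phi> - const_field m)"

text \<open>Auxiliary microcanonical ensemble: normalized uniform surface measure on the (N-2)-sphere,
  realised as the (normalized) cone measure = image of the uniform measure on the solid
  cylinder under the radial projection.\<close>
definition mu_MC :: "real \<Rightarrow> real \<Rightarrow> (real ^ 'n::finite) measure" where
  "mu_MC m \<rho> = distr (uniform_measure lborel (mc_cylinder m \<rho>)) borel (mc_radial m \<rho>)"

definition couplings :: "('a::topological_space) measure \<Rightarrow> ('a::topological_space) measure \<Rightarrow> ('a \<times> 'a) measure set" where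
  "couplings \<mu>1 \<mu>2 = {\<gamma>. sets \<gamma> = sets borel \<and> emeasure \<gamma> (space \<gamma>) = 1 \<and>
      distr \<gamma> borel fst = \<mu>1 \<and> distr \<gamma> borel snd = \<mu>2}"

definition w2_sq :: "(real ^ 'n::finite) measure \<Rightarrow> (real ^ 'n) measure \<Rightarrow> ennreal" where
  "w2_sq \<mu>1 \<mu>2 = (INF \<gamma>\<in>couplings \<mu>1 \<mu>2.
      \<integral>\<^sup>+ p. ennreal ((1 / real CARD('n)) * (\<Sum>i\<in>UNIV. \<bar>fst p $ i - snd p $ i\<bar>\<^sup>2)) \<partial>\<gamma>)"

definition w2 :: "(real ^ 'n::finite) measure \<Rightarrow> (real ^ 'n) measure \<Rightarrow> ennreal" where
  "w2 \<mu>1 \<mu>2 = (if w2_sq \<mu>1 \<mu>2 = \<infinity> then \<infinity> else ennreal (sqrt (enn2real (w2_sq \<mu>1 \<mu>2))))"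

end

theory Submission
  imports Defs "HOL-Probability.Probability"
begin

text \<open>
  Let R and R' be the radii of the spheres carrying mu_MC m and mu_MC m', and c, c' the constant
  fields m, m'. The affine map that shifts by (m' - m)(1,...,1) and dilates the sum-zero
  hyperplane by R'/R carries the solid cylinder defining mu_MC m onto the one defining mu_MC m'.
  Being an affine bijection it maps uniform measure to uniform measure, and it intertwines the
  two radial projections with the similarity T x = c' + (R'/R)(x - c). Hence mu_MC m' is the
  image of mu_MC m under T, and x |-> (x, T x) is a coupling. On the sphere x - T x splits
  orthogonally into (m - m')(1,...,1) and a hyperplane vector of length |R - R'|, so the cost is
  (m - m')^2 + (s - s')^2 with s = sqrt (rho - m^2), and
  |s - s'| = |m - m'| |m + m'| / (s + s') <= 2 sqrt rho |m - m'| / s.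
\<close>

section \<open>Lebesgue measure under affine bijections\<close>

text \<open>
  measure_linear_image gives the factor |det (matrix f)| only for well-ordered index types;
  for an arbitrary finite index type the existence of some factor is all that is needed.
\<close>

definition scales_measure_by :: "(real^'n::finite \<Rightarrow> real^'n) \<Rightarrow> real \<Rightarrow> bool" where
  "scales_measure_by f k \<longleftrightarrow>
     (\<forall>S\<in>lmeasurable. f ` S \<in> lmeasurable \<and> measure lebesgue (f ` S) = k * measure lebesgue S)"

lemma scales_measure_byD:
  assumes "scales_measure_by f k" "S \<in> lmeasurable"
  shows "f ` S \<in> lmeasurable" "measure lebesgue (f ` S) = k * measure lebesgue S"
  using assms unfolding scales_measure_by_def by blast+

lemma scales_measure_by_1_if_boxes:
  fixes f :: "real^'n::finite \<Rightarrow> real^'n"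
  assumes "linear f" and "\<And>a b. measure lebesgue (f ` cbox a b) = measure lebesgue (cbox a b)"
  shows "scales_measure_by f 1"
  unfolding scales_measure_by_def
proof
  fix S :: "(real^'n) set"
  assume "S \<in> lmeasurable"
  moreover have "measure lebesgue (f ` cbox a b) = 1 * measure lebesgue (cbox a b)" for a b
    using assms(2) by simp
  ultimately show "f ` S \<in> lmeasurable \<and> measure lebesgue (f ` S) = 1 * measure lebesgue S"
    using measure_linear_sufficient[OF assms(1)] by (metis mult_1)
qed

lemma measure_swap_coordinates_cbox:
  fixes a b :: "real^'n::finite" and p q :: 'n
  shows "measure lebesgue ((\<lambda>v. \<chi> i. v $ Transposition.transpose p q i) ` cbox a b)
           = measure lebesgue (cbox a b)" (is "measure lebesgue (?h ` _) = _")
proof (cases "cbox a b = {}")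
  case False
  have eq: "?h ` cbox a b = cbox (?h a) (?h b)"
    by (auto simp: image_iff lambda_swap_Galois mem_box_cart) (metis transpose_involutory)+
  have "?h ` cbox a b \<noteq> {}"
    using False by blast
  then show ?thesis
    using prod.permute[OF permutes_swap_id, where S=UNIV and g="\<lambda>i. (b - a) $ i", symmetric]
    by (simp add: eq content_cbox_cart False)
qed simp

lemma measure_shear_cbox:
  fixes a b :: "real^'n::finite" and p q :: 'n
  defines "h \<equiv> \<lambda>v::real^'n. \<chi> i. if i = p then v $ p + v $ q else v $ i"
  assumes "p \<noteq> q"
  shows "measure lebesgue (h ` cbox a b) = measure lebesgue (cbox a b)"
proof (cases "cbox a b = {}")
  case False
  have lin: "linear h"
    unfolding h_def by (rule linearI) (auto simp: vec_eq_iff algebra_simps)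
  \<comment> \<open>measure_shear_interval needs a nonnegative q-th lower corner, so translate the box first.\<close>
  define v :: "real^'n" where "v = (\<chi> i. if i = q then - a $ q else 0)"
  have "h ` cbox a b = (+) (- h v) ` h ` cbox (v + a) (v + b)"
    by (simp add: cbox_translation image_image linear_add[OF lin] cong: image_cong_simp)
  then have "measure lebesgue (h ` cbox a b) = measure lebesgue (h ` cbox (v + a) (v + b))"
    by (metis measure_translation)
  also have "\<dots> = measure lebesgue (cbox (v + a) (v + b))"
    unfolding h_def using assms False
    by (intro measure_shear_interval) (auto simp: v_def cbox_translation)
  also have "\<dots> = measure lebesgue (cbox a b)"
    by (simp add: cbox_translation measure_translation)
  finally show ?thesis .
qed simp

lemma linear_scales_measure:
  fixes f :: "real^'n::finite \<Rightarrow> real^'n"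
  assumes "linear f"
  shows "\<exists>k\<ge>0. scales_measure_by f k"
proof (rule induct_linear_elementary[OF assms])
  fix f g :: "real^'n \<Rightarrow> real^'n"
  assume "\<exists>k\<ge>0. scales_measure_by f k" "\<exists>k\<ge>0. scales_measure_by g k"
  then obtain kf kg where "kf \<ge> 0" "scales_measure_by f kf" "kg \<ge> 0" "scales_measure_by g kg"
    by blast
  then have "scales_measure_by (f \<circ> g) (kf * kg)"
    unfolding scales_measure_by_def image_comp[symmetric] by simp
  then show "\<exists>k\<ge>0. scales_measure_by (f \<circ> g) k"
    using \<open>kf \<ge> 0\<close> \<open>kg \<ge> 0\<close> mult_nonneg_nonneg by blast
next
  fix f :: "real^'n \<Rightarrow> real^'n" and i
  assume "linear f" and "\<And>x. f x $ i = 0"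
  then have "\<not> inj f"
    by (metis linear_injective_imp_surjective one_neq_zero surjE vec_component)
  then have "negligible (f ` S)" for S
    using \<open>linear f\<close> negligible_linear_singular_image by blast
  then have "scales_measure_by f 0"
    by (simp add: scales_measure_by_def negligible_imp_measurable negligible_imp_measure0)
  then show "\<exists>k\<ge>0. scales_measure_by f k"
    by blast
next
  fix c :: "'n \<Rightarrow> real"
  show "\<exists>k\<ge>0. scales_measure_by (\<lambda>x. \<chi> i. c i * x $ i) k"
    by (intro exI[of _ "\<bar>prod c UNIV\<bar>"]) (simp add: scales_measure_by_def measurable_stretch measure_stretch)
next
  fix p q :: 'n
  have "linear (\<lambda>v::real^'n. \<chi> i. v $ Transposition.transpose p q i)"
    by (rule linearI) (simp_all add: plus_vec_def scaleR_vec_def)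
  then show "\<exists>k\<ge>0. scales_measure_by (\<lambda>v. \<chi> i. v $ Transposition.transpose p q i) k"
    using scales_measure_by_1_if_boxes[OF _ measure_swap_coordinates_cbox] zero_le_one by blast
next
  fix p q :: 'n
  assume "p \<noteq> q"
  have "linear (\<lambda>v::real^'n. \<chi> i. if i = p then v $ p + v $ q else v $ i)"
    by (rule linearI) (auto simp: vec_eq_iff algebra_simps)
  then show "\<exists>k\<ge>0. scales_measure_by (\<lambda>v. \<chi> i. if i = p then v $ p + v $ q else v $ i) k"
    using scales_measure_by_1_if_boxes[OF _ measure_shear_cbox[OF \<open>p \<noteq> q\<close>]] zero_le_one by blast
qed

lemma affine_vimage_scales_measure:
  fixes L :: "real^'n::finite \<Rightarrow> real^'n"
  assumes "linear L" "inj L"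
  obtains k where "k > 0"
    and "\<And>X. X \<in> lmeasurable \<Longrightarrow> (\<lambda>x. L x + b) -` X \<in> lmeasurable \<and>
                measure lebesgue ((\<lambda>x. L x + b) -` X) = k * measure lebesgue X"
proof -
  obtain L' where L': "linear L'" "\<And>x. L' (L x) = x" "\<And>y. L (L' y) = y"
    using eucl.linear_injective_isomorphism[OF assms] by auto
  obtain k where "k \<ge> 0" and k: "scales_measure_by L' k"
    using linear_scales_measure[OF L'(1)] by blast
  obtain kL where kL: "scales_measure_by L kL"
    using linear_scales_measure[OF assms(1)] by blast
  have "measure lebesgue (L' ` L ` ball 0 1) = measure lebesgue (ball 0 1 :: (real^'n) set)"
    by (simp add: image_image L'(2))
  then have "k * kL = 1"
    using scales_measure_byD[OF k scales_measure_byD(1)[OF kL]] scales_measure_byD(2)[OF kL]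
      content_ball_pos[of 1 "0 :: real^'n"] by simp
  with \<open>k \<ge> 0\<close> have "k > 0"
    by (metis less_eq_real_def mult_zero_left zero_neq_one)
  have "(\<lambda>x. L x + b) -` X = (\<lambda>y. y - L' b) ` L' ` X" for X
  proof (intro set_eqI iffI)
    fix x
    assume "x \<in> (\<lambda>x. L x + b) -` X"
    moreover have "x = L' (L x + b) - L' b"
      using L' by (simp add: linear_add)
    ultimately show "x \<in> (\<lambda>y. y - L' b) ` L' ` X"
      by blast
  qed (use L' in \<open>auto simp: linear_diff[OF assms(1)]\<close>)
  then show ?thesis
    using that[OF \<open>k > 0\<close>] scales_measure_byD[OF k]
    by (simp add: measurable_translation_subtract measure_translation_subtract)
qed

lemma emeasure_lborel_eq_measure:
  fixes X :: "'a::euclidean_space set"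
  assumes "X \<in> sets borel" "X \<in> lmeasurable"
  shows "emeasure lborel X = ennreal (measure lebesgue X)"
proof -
  have "emeasure lborel X = emeasure lebesgue X"
    using assms(1) by simp
  then show ?thesis
    using assms(2) by (simp add: emeasure_eq_measure2)
qed

lemma distr_uniform_measure_if_vimage_scales:
  fixes T :: "'a::euclidean_space \<Rightarrow> 'b::euclidean_space"
  assumes T: "T \<in> borel_measurable borel"
    and C: "C \<in> sets borel" "C \<in> lmeasurable" "emeasure lborel C \<noteq> 0"
    and "k > 0"
    and scale: "\<And>X. X \<in> lmeasurable \<Longrightarrow>
                  T -` X \<in> lmeasurable \<and> measure lebesgue (T -` X) = k * measure lebesgue X"
  shows "distr (uniform_measure lborel (T -` C)) borel T = uniform_measure lborel C"
proof -
  have emeasure_vimage: "emeasure lborel (T -` X) = ennreal (k * measure lebesgue X)"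
    if "X \<in> sets borel" "X \<in> lmeasurable" for X
    using scale[OF that(2)] measurable_sets_borel[OF T that(1)] by (simp add: emeasure_lborel_eq_measure)
  have "measure lebesgue C > 0"
    using C by (simp add: emeasure_lborel_eq_measure zero_less_measure_iff)
  have "distr (uniform_measure lborel (T -` C)) borel T = distr (uniform_measure lborel (T -` C)) lborel T"
    by (rule distr_cong) simp_all
  also have "\<dots> = uniform_measure lborel C"
  proof (rule uniform_distrI)
    show "T \<in> uniform_measure lborel (T -` C) \<rightarrow>\<^sub>M lborel"
      using T by simp
    show "C \<in> sets lborel" "emeasure lborel C \<noteq> \<infinity>" "emeasure lborel C \<noteq> 0"
      using C by (simp_all add: emeasure_lborel_eq_measure)
    fix B :: "'b set"
    assume "B \<in> sets lborel"
    then have B: "B \<in> sets borel" "C \<inter> B \<in> sets borel" "C \<inter> B \<in> lmeasurable"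
      using C by (auto intro: fmeasurable_Int_fmeasurable)
    have "emeasure (uniform_measure lborel (T -` C)) (T -` B \<inter> space (uniform_measure lborel (T -` C)))
        = emeasure lborel (T -` (C \<inter> B)) / emeasure lborel (T -` C)"
      using measurable_sets_borel[OF T] B C by simp
    also have "\<dots> = emeasure lborel (C \<inter> B) / emeasure lborel C"
      using B C \<open>k > 0\<close> \<open>measure lebesgue C > 0\<close>
      by (simp add: emeasure_vimage emeasure_lborel_eq_measure divide_ennreal del: vimage_Int)
    finally show "emeasure (uniform_measure lborel (T -` C)) (T -` B \<inter> space (uniform_measure lborel (T -` C)))
        = emeasure lborel (C \<inter> B) / emeasure lborel C" .
  qed
  finally show ?thesis .
qed

section \<open>The cylinder and the radial projection\<close>

lemma field_sum_add [simp]: "field_sum (x + y) = field_sum x + field_sum (y :: real^'n::finite)"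
  by (simp add: field_sum_def sum.distrib)

lemma field_sum_diff [simp]: "field_sum (x - y) = field_sum x - field_sum (y :: real^'n::finite)"
  by (simp add: field_sum_def sum_subtractf)

lemma field_sum_scaleR [simp]: "field_sum (c *\<^sub>R x) = c * field_sum (x :: real^'n::finite)"
  by (simp add: field_sum_def sum_distrib_left)

lemma field_sum_const_field [simp]: "field_sum (const_field c :: real^'n::finite) = c * real CARD('n)"
  by (simp add: field_sum_def const_field_def)

lemma const_field_eq_scaleR: "const_field c = c *\<^sub>R (const_field 1 :: real^'n::finite)"
  by (simp add: const_field_def vec_eq_iff)

lemma inner_const_field_1: "x \<bullet> const_field 1 = field_sum (x :: real^'n::finite)"
  by (simp add: field_sum_def const_field_def inner_vec_def)

lemma norm_const_field_1: "(norm (const_field 1 :: real^'n::finite))\<^sup>2 = real CARD('n)"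
  by (simp add: power2_norm_eq_inner inner_const_field_1)

lemma continuous_on_field_sum: "continuous_on UNIV (field_sum :: real^'n::finite \<Rightarrow> real)"
  unfolding field_sum_def by (intro continuous_intros)

lemma borel_measurable_field_sum [measurable]: "(field_sum :: real^'n::finite \<Rightarrow> real) \<in> borel_measurable borel"
  using continuous_on_field_sum by (rule borel_measurable_continuous_onI)

lemma hyp_proj_eq: "hyp_proj m \<phi> = const_field m + hyp_proj 0 (\<phi> :: real^'n::finite)"
  by (simp add: hyp_proj_def const_field_eq_scaleR[of m] algebra_simps diff_divide_distrib)

lemma field_sum_hyp_proj_0 [simp]: "field_sum (hyp_proj 0 (\<phi> :: real^'n::finite)) = 0"
  by (simp add: hyp_proj_def)

lemma linear_hyp_proj_0: "linear (hyp_proj 0 :: real^'n::finite \<Rightarrow> real^'n)"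
  by (rule linearI) (simp_all add: hyp_proj_def algebra_simps add_divide_distrib)

lemma hyp_proj_0_const_field [simp]: "hyp_proj 0 (const_field c :: real^'n::finite) = 0"
  by (simp add: hyp_proj_def flip: const_field_eq_scaleR)

lemma hyp_proj_0_idem [simp]: "hyp_proj 0 (hyp_proj 0 \<phi>) = hyp_proj 0 (\<phi> :: real^'n::finite)"
  by (simp add: hyp_proj_def[of 0 "hyp_proj 0 \<phi>"])

lemma continuous_on_hyp_proj_0: "continuous_on UNIV (hyp_proj 0 :: real^'n::finite \<Rightarrow> real^'n)"
  using linear_hyp_proj_0 by (intro linear_continuous_on) (simp add: linear_conv_bounded_linear)

lemma borel_measurable_hyp_proj_0 [measurable]: "(hyp_proj 0 :: real^'n::finite \<Rightarrow> real^'n) \<in> borel_measurable borel"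
  using continuous_on_hyp_proj_0 by (rule borel_measurable_continuous_onI)

lemma mc_radius_eq: "mc_radius TYPE('n::finite) m \<rho> = sqrt (real CARD('n)) * sqrt (\<rho> - m\<^sup>2)"
  by (simp add: mc_radius_def real_sqrt_mult)

lemma mc_cylinder_eq:
  "mc_cylinder m \<rho> = {\<phi> :: real^'n::finite.
     m * real CARD('n) \<le> field_sum \<phi> \<and> field_sum \<phi> \<le> m * real CARD('n) + 1 \<and>
     0 < norm (hyp_proj 0 \<phi>) \<and> norm (hyp_proj 0 \<phi>) \<le> mc_radius TYPE('n) m \<rho>}"
  by (simp add: mc_cylinder_def hyp_proj_eq[of m])

lemma mc_radial_eq:
  "mc_radial m \<rho> \<phi> = const_field m +
     (mc_radius TYPE('n) m \<rho> / norm (hyp_proj 0 \<phi>)) *\<^sub>R hyp_proj 0 (\<phi> :: real^'n::finite)"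
  by (simp add: mc_radial_def hyp_proj_eq[of m])

lemma mc_cylinder_borel: "mc_cylinder m \<rho> \<in> sets (borel :: (real^'n::finite) measure)"
  unfolding mc_cylinder_eq by measurable

lemma borel_measurable_mc_radial [measurable]:
  "(mc_radial m \<rho> :: real^'n::finite \<Rightarrow> _) \<in> borel_measurable borel"
  unfolding mc_radial_eq[abs_def] by measurable

lemma mc_cylinder_bounded: "bounded (mc_cylinder m \<rho> :: (real^'n::finite) set)"
proof -
  let ?N = "real CARD('n)" and ?e = "const_field 1 :: real^'n"
  define K where "K = (\<bar>m * ?N\<bar> + 1) / ?N"
  have "norm \<phi> \<le> mc_radius TYPE('n) m \<rho> + K * norm ?e" if "\<phi> \<in> mc_cylinder m \<rho>" for \<phi> :: "real^'n"
  proof -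
    have "\<phi> = hyp_proj 0 \<phi> + (field_sum \<phi> / ?N) *\<^sub>R ?e"
      by (simp add: hyp_proj_def)
    moreover have "\<bar>field_sum \<phi> / ?N\<bar> \<le> K"
      using that unfolding K_def mc_cylinder_eq by (auto simp: abs_div divide_right_mono)
    then have "norm ((field_sum \<phi> / ?N) *\<^sub>R ?e) \<le> K * norm ?e"
      unfolding norm_scaleR by (rule mult_right_mono) simp
    moreover have "norm (hyp_proj 0 \<phi>) \<le> mc_radius TYPE('n) m \<rho>"
      using that unfolding mc_cylinder_eq by auto
    ultimately show ?thesis
      by (metis add_mono norm_triangle_le)
  qed
  then show ?thesis
    unfolding bounded_iff by blast
qed

lemma mc_cylinder_lmeasurable: "mc_cylinder m \<rho> \<in> (lmeasurable :: (real^'n::finite) set set)"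
proof (rule bounded_set_imp_lmeasurable[OF mc_cylinder_bounded])
  show "mc_cylinder m \<rho> \<in> sets (lebesgue :: (real^'n) measure)"
    by (metis mc_cylinder_borel sets_completionI_sets sets_lborel)
qed

lemma emeasure_mc_cylinder:
  "emeasure lborel (mc_cylinder m \<rho> :: (real^'n::finite) set)
     = ennreal (measure lebesgue (mc_cylinder m \<rho> :: (real^'n) set))"
  using mc_cylinder_borel mc_cylinder_lmeasurable by (rule emeasure_lborel_eq_measure)

lemma exists_nonzero_field_sum_0:
  assumes "CARD('n::finite) \<ge> 2"
  obtains w :: "real^'n" where "field_sum w = 0" "w \<noteq> 0"
proof -
  have "\<not> CARD('n) \<le> Suc 0"
    using assms by simp
  then obtain i j :: 'n where "i \<noteq> j"
    by (auto simp: card_le_Suc0_iff_eq)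
  define w :: "real^'n" where "w = axis i 1 - axis j 1"
  have "field_sum w = 0"
    by (simp add: w_def field_sum_def axis_def sum_subtractf)
  moreover have "w $ i = 1"
    using \<open>i \<noteq> j\<close> by (simp add: w_def axis_def)
  then have "w \<noteq> 0"
    by (metis zero_index zero_neq_one)
  ultimately show thesis
    using that by blast
qed

lemma mc_cylinder_measure_pos:
  assumes "CARD('n::finite) \<ge> 2" and R: "mc_radius TYPE('n) m \<rho> > 0"
  shows "measure lebesgue (mc_cylinder m \<rho> :: (real^'n) set) > 0"
proof -
  let ?N = "real CARD('n)" and ?R = "mc_radius TYPE('n) m \<rho>"
  obtain w :: "real^'n" where w: "field_sum w = 0" "w \<noteq> 0"
    using exists_nonzero_field_sum_0[OF assms(1)] by blast
  define v where "v = (?R / 2 / norm w) *\<^sub>R w"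
  have "field_sum v = 0" "norm v = ?R / 2"
    using w R by (simp_all add: v_def)
  then have "hyp_proj 0 v = v"
    by (simp add: hyp_proj_def)
  define p where "p = const_field m + (1 / (2 * ?N)) *\<^sub>R const_field 1 + v"
  have p: "field_sum p = m * ?N + 1 / 2" "hyp_proj 0 p = v"
    using \<open>field_sum v = 0\<close> \<open>hyp_proj 0 v = v\<close>
    by (simp_all add: p_def linear_add[OF linear_hyp_proj_0] linear_scale[OF linear_hyp_proj_0])
  define U where "U = {\<phi> :: real^'n. m * ?N < field_sum \<phi> \<and> field_sum \<phi> < m * ?N + 1 \<and>
                                      0 < norm (hyp_proj 0 \<phi>) \<and> norm (hyp_proj 0 \<phi>) < ?R}"
  have "open U"
    unfolding U_def
    by (intro open_Collect_conj open_Collect_less continuous_on_const continuous_on_field_sum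
        continuous_on_norm continuous_on_hyp_proj_0)
  moreover have "p \<in> U"
    using R \<open>norm v = ?R / 2\<close> by (auto simp: U_def p)
  ultimately obtain r where "r > 0" "ball p r \<subseteq> U"
    by (meson open_contains_ball)
  moreover have "U \<subseteq> mc_cylinder m \<rho>"
    unfolding U_def mc_cylinder_eq by auto
  ultimately have "ball p r \<subseteq> mc_cylinder m \<rho>"
    by blast
  then have "measure lebesgue (ball p r) \<le> measure lebesgue (mc_cylinder m \<rho> :: (real^'n) set)"
    by (rule measure_mono_fmeasurable[OF _ _ mc_cylinder_lmeasurable]) simp
  moreover have "0 < measure lebesgue (ball p r)"
    using \<open>r > 0\<close> by simp
  ultimately show ?thesis
    by linarith
qed

lemma prob_space_uniform_mc_cylinder:
  assumes "CARD('n::finite) \<ge> 2" "mc_radius TYPE('n) m \<rho> > 0"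
  shows "prob_space (uniform_measure lborel (mc_cylinder m \<rho> :: (real^'n) set))"
  using mc_cylinder_measure_pos[OF assms] by (intro prob_space_uniform_measure) (simp_all add: emeasure_mc_cylinder)

lemma prob_space_mu_MC:
  assumes "CARD('n::finite) \<ge> 2" "mc_radius TYPE('n) m \<rho> > 0"
  shows "prob_space (mu_MC m \<rho> :: (real^'n) measure)"
  unfolding mu_MC_def
  by (intro prob_space.prob_space_distr prob_space_uniform_mc_cylinder assms) simp

lemma nn_integral_mu_MC_le:
  assumes "CARD('n::finite) \<ge> 2" "mc_radius TYPE('n) m \<rho> > 0"
    and "f \<in> borel_measurable borel" "\<And>\<phi>. f (mc_radial m \<rho> \<phi>) \<le> B"
  shows "(\<integral>\<^sup>+x. f x \<partial>(mu_MC m \<rho> :: (real^'n) measure)) \<le> B"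
proof -
  let ?U = "uniform_measure lborel (mc_cylinder m \<rho> :: (real^'n) set)"
  have "(\<integral>\<^sup>+x. f x \<partial>(mu_MC m \<rho> :: (real^'n) measure)) = (\<integral>\<^sup>+\<phi>. f (mc_radial m \<rho> \<phi>) \<partial>?U)"
    unfolding mu_MC_def using assms(3) by (subst nn_integral_distr) simp_all
  also have "\<dots> \<le> (\<integral>\<^sup>+\<phi>. B \<partial>?U)"
    using assms(4) by (rule nn_integral_mono)
  also have "\<dots> = B"
    using prob_space.emeasure_space_1[OF prob_space_uniform_mc_cylinder[OF assms(1,2)]] by simp
  finally show ?thesis .
qed

definition hyperplane_scaling :: "real \<Rightarrow> real^'n::finite \<Rightarrow> real^'n" where
  "hyperplane_scaling c \<phi> = \<phi> + (c - 1) *\<^sub>R hyp_proj 0 \<phi>"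

lemma linear_hyperplane_scaling: "linear (hyperplane_scaling c :: real^'n::finite \<Rightarrow> _)"
  by (rule linearI)
    (simp_all add: hyperplane_scaling_def linear_add[OF linear_hyp_proj_0]
      linear_scale[OF linear_hyp_proj_0] algebra_simps)

lemma field_sum_hyperplane_scaling [simp]:
  "field_sum (hyperplane_scaling c \<phi>) = field_sum (\<phi> :: real^'n::finite)"
  by (simp add: hyperplane_scaling_def)

lemma hyp_proj_0_hyperplane_scaling [simp]:
  "hyp_proj 0 (hyperplane_scaling c \<phi>) = c *\<^sub>R hyp_proj 0 (\<phi> :: real^'n::finite)"
proof -
  have "hyp_proj 0 (hyperplane_scaling c \<phi>) = hyp_proj 0 \<phi> + (c - 1) *\<^sub>R hyp_proj 0 \<phi>"
    unfolding hyperplane_scaling_def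
    by (simp only: linear_add[OF linear_hyp_proj_0] linear_scale[OF linear_hyp_proj_0] hyp_proj_0_idem)
  then show ?thesis
    by (simp add: algebra_simps)
qed

lemma borel_measurable_hyperplane_scaling [measurable]:
  "(hyperplane_scaling c :: real^'n::finite \<Rightarrow> _) \<in> borel_measurable borel"
  unfolding hyperplane_scaling_def[abs_def] by measurable

lemma inj_hyperplane_scaling:
  assumes "c \<noteq> 0"
  shows "inj (hyperplane_scaling c :: real^'n::finite \<Rightarrow> _)"
proof (rule inj_on_inverseI)
  fix \<phi> :: "real^'n"
  have "hyperplane_scaling (1 / c) (hyperplane_scaling c \<phi>)
      = \<phi> + ((c - 1) + (1 / c - 1) * c) *\<^sub>R hyp_proj 0 \<phi>"
    by (simp add: hyperplane_scaling_def[of "1 / c"]) (simp add: hyperplane_scaling_def algebra_simps)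
  also have "(c - 1) + (1 / c - 1) * c = 0"
    using assms by (simp add: field_simps)
  finally show "hyperplane_scaling (1 / c) (hyperplane_scaling c \<phi>) = \<phi>"
    by simp
qed

lemma mc_cylinder_vimage_affine:
  fixes m m' \<rho> :: real
  defines "R \<equiv> mc_radius TYPE('n::finite) m \<rho>" and "R' \<equiv> mc_radius TYPE('n) m' \<rho>"
  assumes "R > 0" "R' > 0"
  shows "(\<lambda>\<phi>. hyperplane_scaling (R' / R) \<phi> + (m' - m) *\<^sub>R const_field 1) -` mc_cylinder m' \<rho>
           = (mc_cylinder m \<rho> :: (real^'n) set)"
proof (intro set_eqI)
  fix \<phi> :: "real^'n"
  let ?N = "real CARD('n)" and ?p = "norm (hyp_proj 0 \<phi>)"
  define \<psi> where "\<psi> = hyperplane_scaling (R' / R) \<phi> + (m' - m) *\<^sub>R const_field 1"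
  have "field_sum \<psi> = field_sum \<phi> + (m' - m) * ?N"
    by (simp add: \<psi>_def)
  moreover have "norm (hyp_proj 0 \<psi>) = R' / R * ?p"
    using assms by (simp add: \<psi>_def linear_add[OF linear_hyp_proj_0] linear_scale[OF linear_hyp_proj_0])
  moreover have "0 < R' / R * ?p \<longleftrightarrow> 0 < ?p" "R' / R * ?p \<le> R' \<longleftrightarrow> ?p \<le> R"
    using assms by (simp_all add: zero_less_mult_iff field_simps)
  ultimately have "\<psi> \<in> mc_cylinder m' \<rho> \<longleftrightarrow> \<phi> \<in> mc_cylinder m \<rho>"
    unfolding mc_cylinder_eq mem_Collect_eq R_def[symmetric] R'_def[symmetric]
    by (auto simp: algebra_simps)
  then show "\<phi> \<in> (\<lambda>\<phi>. hyperplane_scaling (R' / R) \<phi> + (m' - m) *\<^sub>R const_field 1) -` mc_cylinder m' \<rho>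
      \<longleftrightarrow> \<phi> \<in> mc_cylinder m \<rho>"
    by (simp add: \<psi>_def)
qed

lemma mc_radial_affine:
  fixes m m' \<rho> :: real
  defines "R \<equiv> mc_radius TYPE('n::finite) m \<rho>" and "R' \<equiv> mc_radius TYPE('n) m' \<rho>"
  assumes "R > 0" "R' > 0"
  shows "mc_radial m' \<rho> (hyperplane_scaling (R' / R) \<phi> + (m' - m) *\<^sub>R const_field 1)
           = const_field m' + (R' / R) *\<^sub>R (mc_radial m \<rho> \<phi> - const_field m :: real^'n)"
proof -
  let ?c = "R' / R" and ?p = "hyp_proj 0 \<phi>"
  have "hyp_proj 0 (hyperplane_scaling ?c \<phi> + (m' - m) *\<^sub>R const_field 1) = ?c *\<^sub>R ?p"
    by (simp add: linear_add[OF linear_hyp_proj_0] linear_scale[OF linear_hyp_proj_0])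
  then have "mc_radial m' \<rho> (hyperplane_scaling ?c \<phi> + (m' - m) *\<^sub>R const_field 1)
      = const_field m' + (R' / norm (?c *\<^sub>R ?p) * ?c) *\<^sub>R ?p"
    by (simp add: mc_radial_eq R'_def[symmetric])
  also have "R' / norm (?c *\<^sub>R ?p) * ?c = ?c * (R / norm ?p)"
    using assms by (cases "?p = 0") (simp_all add: field_simps)
  finally show ?thesis
    by (simp add: mc_radial_eq R_def[symmetric])
qed

lemma mu_MC_eq_distr_affine:
  fixes m m' \<rho> :: real
  defines "R \<equiv> mc_radius TYPE('n::finite) m \<rho>" and "R' \<equiv> mc_radius TYPE('n) m' \<rho>"
  assumes "CARD('n) \<ge> 2" "R > 0" "R' > 0"
  shows "(mu_MC m' \<rho> :: (real^'n) measure)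
           = distr (mu_MC m \<rho>) borel (\<lambda>x. const_field m' + (R' / R) *\<^sub>R (x - const_field m))"
proof -
  define A :: "real^'n \<Rightarrow> real^'n" where "A \<phi> = hyperplane_scaling (R' / R) \<phi> + (m' - m) *\<^sub>R const_field 1" for \<phi>
  define T :: "real^'n \<Rightarrow> real^'n" where "T x = const_field m' + (R' / R) *\<^sub>R (x - const_field m)" for x
  have [measurable]: "A \<in> borel_measurable borel" "T \<in> borel_measurable borel"
    unfolding A_def[abs_def] T_def[abs_def] by measurable
  obtain k where "k > 0" and scale: "\<And>X. X \<in> lmeasurable \<Longrightarrow> A -` X \<in> lmeasurable \<and>
      measure lebesgue (A -` X) = k * measure lebesgue X"
    using affine_vimage_scales_measure[OF linear_hyperplane_scaling inj_hyperplane_scaling, of "R' / R"]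
      assms(4,5) unfolding A_def[abs_def] by auto
  have "distr (uniform_measure lborel (A -` mc_cylinder m' \<rho>)) borel A
      = uniform_measure lborel (mc_cylinder m' \<rho>)"
    using mc_cylinder_measure_pos[OF assms(3), of m' \<rho>] \<open>R' > 0\<close>
    by (intro distr_uniform_measure_if_vimage_scales[OF _ mc_cylinder_borel mc_cylinder_lmeasurable _ \<open>k > 0\<close> scale])
      (simp_all add: emeasure_mc_cylinder R'_def)
  moreover have "A -` mc_cylinder m' \<rho> = mc_cylinder m \<rho>"
    using assms(4,5) unfolding A_def R_def R'_def by (rule mc_cylinder_vimage_affine)
  ultimately have uniform: "distr (uniform_measure lborel (mc_cylinder m \<rho>)) borel A
      = uniform_measure lborel (mc_cylinder m' \<rho>)"
    by simp
  have "mc_radial m' \<rho> (A \<phi>) = T (mc_radial m \<rho> \<phi>)" for \<phi>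
    using assms(4,5) unfolding A_def T_def R_def R'_def by (rule mc_radial_affine)
  then have "mc_radial m' \<rho> \<circ> A = T \<circ> mc_radial m \<rho>"
    by auto
  then have "distr (uniform_measure lborel (mc_cylinder m \<rho>)) borel (mc_radial m' \<rho> \<circ> A)
      = distr (uniform_measure lborel (mc_cylinder m \<rho>)) borel (T \<circ> mc_radial m \<rho>)"
    by simp
  then show ?thesis
    unfolding mu_MC_def T_def[symmetric] uniform[symmetric]
    by (subst (1 2) distr_distr) simp_all
qed

section \<open>The transport coupling\<close>

lemma sum_abs_diff_sq_eq_norm_sq:
  "(\<Sum>i\<in>UNIV. \<bar>x $ i - y $ i\<bar>\<^sup>2) = (norm (x - y :: real^'n::finite))\<^sup>2"
  by (simp only: power2_norm_eq_inner inner_vec_def) (simp add: power2_eq_square)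

lemma w2_sq_le_transport_cost:
  fixes \<mu> :: "(real^'n::finite) measure"
  assumes "prob_space \<mu>" "sets \<mu> = sets borel" and [measurable]: "T \<in> borel_measurable borel"
  shows "w2_sq \<mu> (distr \<mu> borel T)
           \<le> (\<integral>\<^sup>+x. ennreal ((norm (x - T x))\<^sup>2 / real CARD('n)) \<partial>\<mu>)"
proof -
  define \<gamma> where "\<gamma> = distr \<mu> borel (\<lambda>x. (x, T x))"
  have [measurable]: "(\<lambda>x. (x, T x)) \<in> borel_measurable \<mu>"
    using assms(2) by (simp add: measurable_cong_sets[OF assms(2) refl] borel_prod[symmetric])
  have [measurable]: "fst \<in> borel_measurable (borel :: ((real^'n) \<times> (real^'n)) measure)"
    "snd \<in> borel_measurable (borel :: ((real^'n) \<times> (real^'n)) measure)"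
    by (intro borel_measurable_continuous_onI continuous_intros)+
  have "distr \<gamma> borel fst = distr \<mu> borel (\<lambda>x. x)"
    by (simp add: \<gamma>_def distr_distr comp_def)
  also have "\<dots> = \<mu>"
    using assms(2) by (intro distr_id2) simp
  finally have "distr \<gamma> borel fst = \<mu>" .
  moreover have "distr \<gamma> borel snd = distr \<mu> borel T"
    by (simp add: \<gamma>_def distr_distr comp_def)
  moreover have "emeasure \<gamma> (space \<gamma>) = 1"
    unfolding \<gamma>_def by (intro prob_space.emeasure_space_1 prob_space.prob_space_distr assms(1)) simp
  ultimately have "\<gamma> \<in> couplings \<mu> (distr \<mu> borel T)"
    by (simp add: couplings_def \<gamma>_def)
  then have "w2_sq \<mu> (distr \<mu> borel T)
      \<le> (\<integral>\<^sup>+p. ennreal ((1 / real CARD('n)) * (\<Sum>i\<in>UNIV. \<bar>fst p $ i - snd p $ i\<bar>\<^sup>2)) \<partial>\<gamma>)"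
    unfolding w2_sq_def by (rule INF_lower)
  also have "\<dots> = (\<integral>\<^sup>+p. ennreal ((norm (fst p - snd p))\<^sup>2 / real CARD('n)) \<partial>\<gamma>)"
    unfolding sum_abs_diff_sq_eq_norm_sq by simp
  also have "\<dots> = (\<integral>\<^sup>+x. ennreal ((norm (x - T x))\<^sup>2 / real CARD('n)) \<partial>\<mu>)"
    unfolding \<gamma>_def by (subst nn_integral_distr) simp_all
  finally show ?thesis .
qed

lemma w2_le_sqrt_if_w2_sq_le:
  assumes "w2_sq \<mu> \<nu> \<le> ennreal D" "D \<ge> 0"
  shows "w2 \<mu> \<nu> \<le> ennreal (sqrt D)"
proof -
  have "w2_sq \<mu> \<nu> \<noteq> \<infinity>"
    using assms(1) by (metis ennreal_neq_top top.extremum_uniqueI infinity_ennreal_def order_trans)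
  moreover have "enn2real (w2_sq \<mu> \<nu>) \<le> D"
    using assms enn2real_mono[OF assms(1)] by simp
  ultimately show ?thesis
    unfolding w2_def by (simp add: ennreal_leI)
qed

lemma norm_sq_affine_displacement_le:
  fixes u :: "real^'n::finite"
  assumes "field_sum u = 0" "norm u \<le> R" "R > 0"
  shows "(norm (const_field m + u - (const_field m' + (R' / R) *\<^sub>R u)))\<^sup>2
           \<le> real CARD('n) * (m - m')\<^sup>2 + (R - R')\<^sup>2"
proof -
  have "const_field m + u - (const_field m' + (R' / R) *\<^sub>R u)
      = (m - m') *\<^sub>R const_field 1 + (1 - R' / R) *\<^sub>R u"
    by (simp add: const_field_def vec_eq_iff algebra_simps)
  moreover have "orthogonal ((m - m') *\<^sub>R const_field 1) ((1 - R' / R) *\<^sub>R u)"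
    using assms(1) by (simp add: orthogonal_def inner_commute[of "const_field 1"] inner_const_field_1)
  ultimately have "(norm (const_field m + u - (const_field m' + (R' / R) *\<^sub>R u)))\<^sup>2
      = real CARD('n) * (m - m')\<^sup>2 + (1 - R' / R)\<^sup>2 * (norm u)\<^sup>2"
    by (simp add: norm_add_Pythagorean power_mult_distrib norm_const_field_1)
  also have "\<dots> \<le> real CARD('n) * (m - m')\<^sup>2 + (1 - R' / R)\<^sup>2 * R\<^sup>2"
    using assms(2) by (intro add_left_mono mult_left_mono power_mono) auto
  also have "(1 - R' / R)\<^sup>2 * R\<^sup>2 = (R - R')\<^sup>2"
    using assms(3) by (simp add: power2_eq_square field_simps)
  finally show ?thesis .
qed

lemma mc_radial_displacement_le:
  fixes m m' \<rho> :: real and \<phi> :: "real^'n::finite"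
  defines "R \<equiv> mc_radius TYPE('n::finite) m \<rho>"
  assumes "R > 0"
  shows "(norm (mc_radial m \<rho> \<phi> - (const_field m' + (R' / R) *\<^sub>R (mc_radial m \<rho> \<phi> - const_field m))))\<^sup>2
           \<le> real CARD('n) * (m - m')\<^sup>2 + (R - R')\<^sup>2"
proof -
  define u :: "real^'n" where "u = (R / norm (hyp_proj 0 \<phi>)) *\<^sub>R hyp_proj 0 \<phi>"
  have "mc_radial m \<rho> \<phi> = const_field m + u"
    by (simp add: u_def mc_radial_eq R_def)
  moreover have "field_sum u = 0" "norm u \<le> R"
    using assms(2) by (auto simp: u_def)
  ultimately show ?thesis
    using norm_sq_affine_displacement_le[OF _ _ assms(2)] by simp
qed

lemma w2_sq_mu_MC_le:
  assumes "CARD('n::finite) \<ge> 2" "m\<^sup>2 < \<rho>" "m'\<^sup>2 < \<rho>"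
  shows "w2_sq (mu_MC m \<rho> :: (real^'n) measure) (mu_MC m' \<rho>)
           \<le> ennreal ((m - m')\<^sup>2 + (sqrt (\<rho> - m\<^sup>2) - sqrt (\<rho> - m'\<^sup>2))\<^sup>2)"
proof -
  let ?N = "real CARD('n)"
  define R R' where "R = mc_radius TYPE('n) m \<rho>" and "R' = mc_radius TYPE('n) m' \<rho>"
  define T :: "real^'n \<Rightarrow> real^'n" where "T x = const_field m' + (R' / R) *\<^sub>R (x - const_field m)" for x
  have "R > 0" "R' > 0" and R_diff: "(R - R')\<^sup>2 = ?N * (sqrt (\<rho> - m\<^sup>2) - sqrt (\<rho> - m'\<^sup>2))\<^sup>2"
    using assms by (simp_all add: R_def R'_def mc_radius_eq power_mult_distrib flip: right_diff_distrib)
  have "(mu_MC m' \<rho> :: (real^'n) measure) = distr (mu_MC m \<rho>) borel T"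
    using assms(1) \<open>R > 0\<close> \<open>R' > 0\<close> unfolding T_def[abs_def] R_def R'_def
    by (rule mu_MC_eq_distr_affine)
  moreover have "T \<in> borel_measurable borel"
    unfolding T_def[abs_def] by measurable
  ultimately have "w2_sq (mu_MC m \<rho> :: (real^'n) measure) (mu_MC m' \<rho>)
      \<le> (\<integral>\<^sup>+x. ennreal ((norm (x - T x))\<^sup>2 / ?N) \<partial>mu_MC m \<rho>)"
    using prob_space_mu_MC[OF assms(1)] \<open>R > 0\<close>
    by (simp add: w2_sq_le_transport_cost R_def mu_MC_def)
  also have "\<dots> \<le> ennreal ((m - m')\<^sup>2 + (sqrt (\<rho> - m\<^sup>2) - sqrt (\<rho> - m'\<^sup>2))\<^sup>2)"
  proof (rule nn_integral_mu_MC_le)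
    fix \<phi>
    show "ennreal ((norm (mc_radial m \<rho> \<phi> - T (mc_radial m \<rho> \<phi>)))\<^sup>2 / ?N)
        \<le> ennreal ((m - m')\<^sup>2 + (sqrt (\<rho> - m\<^sup>2) - sqrt (\<rho> - m'\<^sup>2))\<^sup>2)"
      using mc_radial_displacement_le[where m=m and \<rho>=\<rho> and m'=m' and R'=R' and \<phi>=\<phi>]
        \<open>R > 0\<close> R_diff by (intro ennreal_leI) (simp add: T_def R_def field_simps)
  qed (use assms(1) \<open>R > 0\<close> in \<open>simp_all add: R_def T_def[abs_def]\<close>)
  finally show ?thesis .
qed

lemma circle_chord_le:
  fixes \<rho> m m' :: real
  assumes "\<rho> > 0" "\<bar>m\<bar> < sqrt \<rho>" "\<bar>m'\<bar> < sqrt \<rho>"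
  shows "sqrt ((m - m')\<^sup>2 + (sqrt (\<rho> - m\<^sup>2) - sqrt (\<rho> - m'\<^sup>2))\<^sup>2)
           \<le> (1 + 2 / sqrt (1 - m\<^sup>2 / \<rho>)) * \<bar>m - m'\<bar>"
proof -
  define s s' where "s = sqrt (\<rho> - m\<^sup>2)" and "s' = sqrt (\<rho> - m'\<^sup>2)"
  have "m\<^sup>2 < \<rho>" "m'\<^sup>2 < \<rho>"
    using assms by (metis abs_ge_zero real_sqrt_abs real_sqrt_less_iff)+
  then have "s > 0" "s' > 0" "s\<^sup>2 = \<rho> - m\<^sup>2" "s'\<^sup>2 = \<rho> - m'\<^sup>2"
    by (simp_all add: s_def s'_def)
  then have "(s - s') * (s + s') = (m' - m) * (m' + m)"
    by (simp add: power2_eq_square algebra_simps)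
  then have "\<bar>s - s'\<bar> * (s + s') = \<bar>m - m'\<bar> * \<bar>m + m'\<bar>"
    using \<open>s > 0\<close> \<open>s' > 0\<close>
    by (metis abs_minus_commute abs_mult abs_of_pos add.commute add_pos_pos)
  then have "\<bar>s - s'\<bar> = \<bar>m - m'\<bar> * (\<bar>m + m'\<bar> / (s + s'))"
    using \<open>s > 0\<close> \<open>s' > 0\<close> by (simp add: field_simps)
  also have "\<dots> \<le> \<bar>m - m'\<bar> * (2 * sqrt \<rho> / s)"
    using assms \<open>s > 0\<close> \<open>s' > 0\<close>
    by (intro mult_left_mono frac_le) auto
  also have "2 * sqrt \<rho> / s = 2 / sqrt (1 - m\<^sup>2 / \<rho>)"
    using assms(1) \<open>s > 0\<close> by (simp add: s_def field_simps real_sqrt_divide)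
  finally have "\<bar>s - s'\<bar> \<le> \<bar>m - m'\<bar> * (2 / sqrt (1 - m\<^sup>2 / \<rho>))" .
  moreover have "sqrt ((m - m')\<^sup>2 + (s - s')\<^sup>2) \<le> \<bar>m - m'\<bar> + \<bar>s - s'\<bar>"
    by (rule real_le_lsqrt) (simp_all add: power2_eq_square algebra_simps)
  ultimately show ?thesis
    unfolding s_def[symmetric] s'_def[symmetric] by (simp add: algebra_simps)
qed

theorem theorem4p7:
  fixes \<rho> m m' :: real
  assumes "CARD('n::finite) \<ge> 2"
    and "\<rho> > 0"
    and "\<bar>m\<bar> < sqrt \<rho>" and "\<bar>m'\<bar> < sqrt \<rho>"
  shows "w2 (mu_MC m \<rho> :: (real ^ 'n) measure) (mu_MC m' \<rho>)
           \<le> ennreal ((1 + 2 / sqrt (1 - m\<^sup>2 / \<rho>)) * \<bar>m - m'\<bar>)"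
proof -
  have "m\<^sup>2 < \<rho>" "m'\<^sup>2 < \<rho>"
    using assms by (metis abs_ge_zero real_sqrt_abs real_sqrt_less_iff)+
  with assms(1) have "w2 (mu_MC m \<rho> :: (real^'n) measure) (mu_MC m' \<rho>)
      \<le> ennreal (sqrt ((m - m')\<^sup>2 + (sqrt (\<rho> - m\<^sup>2) - sqrt (\<rho> - m'\<^sup>2))\<^sup>2))"
    by (intro w2_le_sqrt_if_w2_sq_le w2_sq_mu_MC_le) simp_all
  also have "\<dots> \<le> ennreal ((1 + 2 / sqrt (1 - m\<^sup>2 / \<rho>)) * \<bar>m - m'\<bar>)"
    using assms(2-4) by (intro ennreal_leI circle_chord_le)
  finally show ?thesis .
qed

end
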